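(* Let $I\subseteq\mathbb{R}$ be an interval, $\phi:I\times\mathbb{R}^2\to\mathbb{C}$ a smooth function and $\widetilde{A}=\widetilde{A}_tdt+\widetilde{A}_1dx^1+\widetilde{A}_2dx^2$ a smooth real-valued $1$-form on $I\times\mathbb{R}^2$, with covariant derivatives $\widetilde{\mathbf{D}}_\alpha=\partial_\alpha+i\widetilde{A}_\alpha$ and curvature $\widetilde F=d\widetilde A$. Suppose $$\widetilde F_{t\bar z}=\bar\phi\,\widetilde{\mathbf{D}}_{\bar z}\phi,\qquad \widetilde F_{z\bar z}=\tfrac{1}{4i}|\phi|^2,\qquad i\widetilde{\mathbf{D}}_t\phi+4\widetilde{\mathbf{D}}_z\widetilde{\mathbf{D}}_{\bar z}\phi=0.$$ Then $$i\widetilde{\mathbf{D}}_t\widetilde{\mathbf{D}}_{\bar z}\phi+4\widetilde{\mathbf{D}}_z\widetilde{\mathbf{D}}_{\bar z}\widetilde{\mathbf{D}}_{\bar z}\phi=0,$$ $$i\widetilde{\mathbf{D}}_t\widetilde{\mathbf{D}}_{\bar z}\widetilde{\mathbf{D}}_{\bar z}\phi+4\widetilde{\mathbf{D}}_{\bar z}\widetilde{\mathbf{D}}_z\widetilde{\mathbf{D}}_{\bar z}\widetilde{\mathbf{D}}_{\bar z}\phi+\bar\phi\,(\widetilde{\mathbf{D}}_{\bar z}\phi)^2=0.$$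
   Context: Wirtinger derivatives: $\partial_z=\frac12\partial_1+\frac1{2i}\partial_2$, $\partial_{\bar z}=\frac12\partial_1-\frac1{2i}\partial_2$; correspondingly $\widetilde A_z=\frac12\widetilde A_1+\frac1{2i}\widetilde A_2$, $\widetilde A_{\bar z}=\frac12\widetilde A_1-\frac1{2i}\widetilde A_2$, $\widetilde{\mathbf{D}}_z=\partial_z+i\widetilde A_z$, $\widetilde{\mathbf{D}}_{\bar z}=\partial_{\bar z}+i\widetilde A_{\bar z}$. Curvature components: $\widetilde F_{t\bar z}=\widetilde F(\partial_t,\partial_{\bar z})=\frac12\widetilde F_{t1}-\frac1{2i}\widetilde F_{t2}$ and $\widetilde F_{z\bar z}=\widetilde F(\partial_z,\partial_{\bar z})=-\frac1{2i}\widetilde F_{12}$, where $\widetilde F_{\alpha\beta}=\partial_\alpha\widetilde A_\beta-\partial_\beta\widetilde A_\alpha$. *)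

theory Defs
  imports "HOL-Analysis.Analysis"
begin

text \<open>Functions on I x R^2 are represented in curried form  t x1 x2.
  Partial derivatives: in t (one-sided at endpoints of I, i.e. within I), in x1, in x2.\<close>

definition pdt :: "real set \<Rightarrow> (real \<Rightarrow> real \<Rightarrow> real \<Rightarrow> 'a::real_normed_vector)
    \<Rightarrow> real \<Rightarrow> real \<Rightarrow> real \<Rightarrow> 'a" where
  "pdt I f t x y = vector_derivative (\<lambda>s. f s x y) (at t within I)"

definition pd1 :: "(real \<Rightarrow> real \<Rightarrow> real \<Rightarrow> 'a::real_normed_vector)
    \<Rightarrow> real \<Rightarrow> real \<Rightarrow> real \<Rightarrow> 'a" where
  "pd1 f t x y = vector_derivative (\<lambda>s. f t s y) (at x)"

definition pd2 :: "(real \<Rightarrow> real \<Rightarrow> real \<Rightarrow> 'a::real_normed_vector)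
    \<Rightarrow> real \<Rightarrow> real \<Rightarrow> real \<Rightarrow> 'a" where
  "pd2 f t x y = vector_derivative (\<lambda>s. f t x s) (at y)"

definition pdir :: "real set \<Rightarrow> nat \<Rightarrow> (real \<Rightarrow> real \<Rightarrow> real \<Rightarrow> 'a::real_normed_vector)
    \<Rightarrow> real \<Rightarrow> real \<Rightarrow> real \<Rightarrow> 'a" where
  "pdir I n f = (if n = 0 then pdt I f else if n = 1 then pd1 f else pd2 f)"

definition smooth3 :: "real set \<Rightarrow> (real \<Rightarrow> real \<Rightarrow> real \<Rightarrow> 'a::real_normed_vector) \<Rightarrow> bool" where
  "smooth3 I f \<longleftrightarrow> (\<forall>ds :: nat list. let g = foldr (pdir I) ds f in
      continuous_on (I \<times> UNIV) (\<lambda>(t, x, y). g t x y) \<and>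
      (\<forall>t\<in>I. \<forall>x y. (\<lambda>s. g s x y) differentiable (at t within I) \<and>
                    (\<lambda>s. g t s y) differentiable (at x) \<and>
                    (\<lambda>s. g t x s) differentiable (at y)))"

definition Az :: "(real \<Rightarrow> real \<Rightarrow> real \<Rightarrow> real) \<Rightarrow> (real \<Rightarrow> real \<Rightarrow> real \<Rightarrow> real)
    \<Rightarrow> real \<Rightarrow> real \<Rightarrow> real \<Rightarrow> complex" where
  "Az A1 A2 t x y = (1/2) * of_real (A1 t x y) + 1 / (2 * \<i>) * of_real (A2 t x y)"

definition Azbar :: "(real \<Rightarrow> real \<Rightarrow> real \<Rightarrow> real) \<Rightarrow> (real \<Rightarrow> real \<Rightarrow> real \<Rightarrow> real)
    \<Rightarrow> real \<Rightarrow> real \<Rightarrow> real \<Rightarrow> complex" where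
  "Azbar A1 A2 t x y = (1/2) * of_real (A1 t x y) - 1 / (2 * \<i>) * of_real (A2 t x y)"

definition cDt :: "real set \<Rightarrow> (real \<Rightarrow> real \<Rightarrow> real \<Rightarrow> real)
    \<Rightarrow> (real \<Rightarrow> real \<Rightarrow> real \<Rightarrow> complex) \<Rightarrow> real \<Rightarrow> real \<Rightarrow> real \<Rightarrow> complex" where
  "cDt I At f t x y = pdt I f t x y + \<i> * of_real (At t x y) * f t x y"

definition cDz :: "(real \<Rightarrow> real \<Rightarrow> real \<Rightarrow> real) \<Rightarrow> (real \<Rightarrow> real \<Rightarrow> real \<Rightarrow> real)
    \<Rightarrow> (real \<Rightarrow> real \<Rightarrow> real \<Rightarrow> complex) \<Rightarrow> real \<Rightarrow> real \<Rightarrow> real \<Rightarrow> complex" where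
  "cDz A1 A2 f t x y = (1/2) * pd1 f t x y + 1 / (2 * \<i>) * pd2 f t x y
                        + \<i> * Az A1 A2 t x y * f t x y"

definition cDzbar :: "(real \<Rightarrow> real \<Rightarrow> real \<Rightarrow> real) \<Rightarrow> (real \<Rightarrow> real \<Rightarrow> real \<Rightarrow> real)
    \<Rightarrow> (real \<Rightarrow> real \<Rightarrow> real \<Rightarrow> complex) \<Rightarrow> real \<Rightarrow> real \<Rightarrow> real \<Rightarrow> complex" where
  "cDzbar A1 A2 f t x y = (1/2) * pd1 f t x y - 1 / (2 * \<i>) * pd2 f t x y
                        + \<i> * Azbar A1 A2 t x y * f t x y"

definition Ftzbar :: "real set \<Rightarrow> (real \<Rightarrow> real \<Rightarrow> real \<Rightarrow> real) \<Rightarrow> (real \<Rightarrow> real \<Rightarrow> real \<Rightarrow> real)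
    \<Rightarrow> (real \<Rightarrow> real \<Rightarrow> real \<Rightarrow> real) \<Rightarrow> real \<Rightarrow> real \<Rightarrow> real \<Rightarrow> complex" where
  "Ftzbar I At A1 A2 t x y =
     (1/2) * of_real (pdt I A1 t x y - pd1 At t x y)
     - 1 / (2 * \<i>) * of_real (pdt I A2 t x y - pd2 At t x y)"

definition Fzzbar :: "(real \<Rightarrow> real \<Rightarrow> real \<Rightarrow> real) \<Rightarrow> (real \<Rightarrow> real \<Rightarrow> real \<Rightarrow> real)
    \<Rightarrow> real \<Rightarrow> real \<Rightarrow> real \<Rightarrow> complex" where
  "Fzzbar A1 A2 t x y = - (1 / (2 * \<i>)) * of_real (pd1 A2 t x y - pd2 A1 t x y)"

end

(*
  With D_n = d_n + i A_n one has D_z = (D_1 - i D_2)/2 and D_zbar = (D_1 + i D_2)/2, and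
  everything rests on the commutator identity [D_m, D_n] = i F_mn, which holds because mixed
  partial derivatives of smooth functions commute. Applying D_zbar to the equation
  i D_t phi + 4 D_z D_zbar phi = 0 and commuting D_zbar past D_t and D_z gives, for
  psi = D_zbar phi, the equation i D_t psi + 4 D_z D_zbar psi + F_tzbar phi - 4i F_zzbar psi = 0;
  by the two curvature equations both curvature terms equal |phi|^2 psi and cancel. Applying
  D_zbar to this new equation in the same way leaves only the curvature term
  F_tzbar psi = cnj phi psi^2, which gives the second identity.

  Sums, products and partial derivatives of smooth functions are smooth by a coinduction:
  a class of functions that is closed under partial differentiation consists of smooth functions.
*)
theory Submission
  imports Defs
begin

section \<open>Equality of mixed partial derivatives\<close>

lemma vector_differentiable_bound:
  fixes f :: "real \<Rightarrow> 'a::real_normed_vector"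
  assumes "convex S" "a \<in> S" "b \<in> S"
    and "\<And>u. u \<in> S \<Longrightarrow> (f has_vector_derivative f' u) (at u within S)"
    and "\<And>u. u \<in> S \<Longrightarrow> norm (f' u) \<le> B"
  shows "norm (f b - f a) \<le> B * \<bar>b - a\<bar>"
proof -
  have "norm (f b - f a) \<le> B * norm (b - a)"
  proof (rule differentiable_bound[OF assms(1) _ _ assms(3,2)])
    show "(f has_derivative (\<lambda>h. h *\<^sub>R f' u)) (at u within S)" if "u \<in> S" for u
      using assms(4)[OF that] by (simp add: has_vector_derivative_def)
    show "onorm (\<lambda>h. h *\<^sub>R f' u) \<le> B" if "u \<in> S" for u
      using assms(5)[OF that] by (simp add: onorm_scaleR_left[OF bounded_linear_ident] onorm_id)
  qed
  then show ?thesis by simp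
qed

lemma rectangle_difference_bound:
  fixes F :: "real \<Rightarrow> real \<Rightarrow> 'a::real_normed_vector"
  assumes S: "convex S" "a \<in> S" "a' \<in> S" and T: "convex T" "b \<in> T" "b' \<in> T"
    and dF: "\<And>u v. u \<in> S \<Longrightarrow> v \<in> T \<Longrightarrow> ((\<lambda>s. F s v) has_vector_derivative Fu u v) (at u within S)"
    and dFu: "\<And>u v. u \<in> S \<Longrightarrow> v \<in> T \<Longrightarrow> ((\<lambda>s. Fu u s) has_vector_derivative Fuv u v) (at v within T)"
    and bound: "\<And>u v. u \<in> S \<Longrightarrow> v \<in> T \<Longrightarrow> norm (Fuv u v - c) \<le> e"
  shows "norm (F a' b' - F a' b - F a b' + F a b - ((a' - a) * (b' - b)) *\<^sub>R c)
           \<le> e * \<bar>b' - b\<bar> * \<bar>a' - a\<bar>"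
proof -
  have inner: "norm (Fu u b' - Fu u b - (b' - b) *\<^sub>R c) \<le> e * \<bar>b' - b\<bar>" if u: "u \<in> S" for u
  proof -
    have "norm ((Fu u b' - (b' - b) *\<^sub>R c) - (Fu u b - (b - b) *\<^sub>R c)) \<le> e * \<bar>b' - b\<bar>"
      using T bound[OF u] dFu[OF u]
      by (intro vector_differentiable_bound[where f = "\<lambda>v. Fu u v - (v - b) *\<^sub>R c"])
        (auto intro!: derivative_eq_intros)
    then show ?thesis by (simp add: algebra_simps)
  qed
  have "norm ((F a' b' - F a' b - ((a' - a) * (b' - b)) *\<^sub>R c)
              - (F a b' - F a b - ((a - a) * (b' - b)) *\<^sub>R c)) \<le> e * \<bar>b' - b\<bar> * \<bar>a' - a\<bar>"
    using S inner dF T(2,3)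
    by (intro vector_differentiable_bound[where f = "\<lambda>u. F u b' - F u b - ((u - a) * (b' - b)) *\<^sub>R c"])
      (auto intro!: derivative_eq_intros)
  then show ?thesis by (simp add: algebra_simps)
qed

lemma mixed_derivatives_diff_bound:
  fixes F :: "real \<Rightarrow> real \<Rightarrow> 'a::real_normed_vector"
  assumes S: "convex S" "a \<in> S" "a' \<in> S" "a' \<noteq> a" and T: "convex T" "b \<in> T" "b' \<in> T" "b' \<noteq> b"
    and dFu: "\<And>u v. u \<in> S \<Longrightarrow> v \<in> T \<Longrightarrow> ((\<lambda>s. F s v) has_vector_derivative Fu u v) (at u within S)"
    and dFv: "\<And>u v. u \<in> S \<Longrightarrow> v \<in> T \<Longrightarrow> ((\<lambda>s. F u s) has_vector_derivative Fv u v) (at v within T)"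
    and dFuv: "\<And>u v. u \<in> S \<Longrightarrow> v \<in> T \<Longrightarrow> ((\<lambda>s. Fu u s) has_vector_derivative Fuv u v) (at v within T)"
    and dFvu: "\<And>u v. u \<in> S \<Longrightarrow> v \<in> T \<Longrightarrow> ((\<lambda>s. Fv s v) has_vector_derivative Fvu u v) (at u within S)"
    and near: "\<And>u v. u \<in> closed_segment a a' \<Longrightarrow> v \<in> closed_segment b b' \<Longrightarrow>
                 norm (Fuv u v - Fuv a b) \<le> e \<and> norm (Fvu u v - Fvu a b) \<le> e"
  shows "norm (Fuv a b - Fvu a b) \<le> 2 * e"
proof -
  \<comment> \<open>Both mixed derivatives approximate the same rectangle difference divided by (a' - a) (b' - b).\<close>
  have S': "closed_segment a a' \<subseteq> S" and T': "closed_segment b b' \<subseteq> T"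
    using S T by (simp_all add: closed_segment_subset)
  have est_uv: "norm (F a' b' - F a' b - F a b' + F a b - ((a' - a) * (b' - b)) *\<^sub>R Fuv a b)
                 \<le> e * \<bar>b' - b\<bar> * \<bar>a' - a\<bar>"
    using S' T' near
    by (intro rectangle_difference_bound[where S = "closed_segment a a'" and T = "closed_segment b b'"
          and Fu = Fu and Fuv = Fuv])
      (auto intro!: has_vector_derivative_within_subset[OF dFu] has_vector_derivative_within_subset[OF dFuv])
  have est_vu: "norm (F a' b' - F a b' - F a' b + F a b - ((b' - b) * (a' - a)) *\<^sub>R Fvu a b)
                 \<le> e * \<bar>a' - a\<bar> * \<bar>b' - b\<bar>"
    using S' T' near
    by (intro rectangle_difference_bound[where S = "closed_segment b b'" and T = "closed_segment a a'"
          and F = "\<lambda>v u. F u v" and Fu = "\<lambda>v u. Fv u v" and Fuv = "\<lambda>v u. Fvu u v"])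
      (auto intro!: has_vector_derivative_within_subset[OF dFv] has_vector_derivative_within_subset[OF dFvu])
  have "\<bar>a' - a\<bar> * \<bar>b' - b\<bar> * norm (Fuv a b - Fvu a b)
          = norm (((a' - a) * (b' - b)) *\<^sub>R Fuv a b - ((a' - a) * (b' - b)) *\<^sub>R Fvu a b)"
    by (simp add: abs_mult flip: scaleR_diff_right)
  also have "\<dots> \<le> \<bar>a' - a\<bar> * \<bar>b' - b\<bar> * (2 * e)"
    using norm_triangle_le_diff[OF add_mono[OF est_vu est_uv]] by (simp add: algebra_simps)
  finally show ?thesis
    using S(4) T(4) by (simp add: mult_le_cancel_left_pos)
qed

lemma mixed_derivatives_eq:
  fixes F :: "real \<Rightarrow> real \<Rightarrow> 'a::real_normed_vector"
  assumes S: "convex S" "a \<in> S" "a islimpt S" and T: "convex T" "b \<in> T" "b islimpt T"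
    and dFu: "\<And>u v. u \<in> S \<Longrightarrow> v \<in> T \<Longrightarrow> ((\<lambda>s. F s v) has_vector_derivative Fu u v) (at u within S)"
    and dFv: "\<And>u v. u \<in> S \<Longrightarrow> v \<in> T \<Longrightarrow> ((\<lambda>s. F u s) has_vector_derivative Fv u v) (at v within T)"
    and dFuv: "\<And>u v. u \<in> S \<Longrightarrow> v \<in> T \<Longrightarrow> ((\<lambda>s. Fu u s) has_vector_derivative Fuv u v) (at v within T)"
    and dFvu: "\<And>u v. u \<in> S \<Longrightarrow> v \<in> T \<Longrightarrow> ((\<lambda>s. Fv s v) has_vector_derivative Fvu u v) (at u within S)"
    and cont_uv: "continuous_on (S \<times> T) (\<lambda>(u, v). Fuv u v)"
    and cont_vu: "continuous_on (S \<times> T) (\<lambda>(u, v). Fvu u v)"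
  shows "Fuv a b = Fvu a b"
proof -
  have small: "norm (Fuv a b - Fvu a b) \<le> 2 * e" if e: "e > 0" for e
  proof -
    obtain d_uv where d_uv: "d_uv > 0" "\<And>p. p \<in> S \<times> T \<Longrightarrow> dist p (a, b) < d_uv \<Longrightarrow>
        dist ((\<lambda>(u, v). Fuv u v) p) (Fuv a b) < e"
      using cont_uv S(2) T(2) e unfolding continuous_on_iff by (metis SigmaI case_prod_conv)
    obtain d_vu where d_vu: "d_vu > 0" "\<And>p. p \<in> S \<times> T \<Longrightarrow> dist p (a, b) < d_vu \<Longrightarrow>
        dist ((\<lambda>(u, v). Fvu u v) p) (Fvu a b) < e"
      using cont_vu S(2) T(2) e unfolding continuous_on_iff by (metis SigmaI case_prod_conv)
    define d where "d = min d_uv d_vu / 2"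
    have d: "d > 0" using d_uv d_vu by (simp add: d_def)
    obtain a' where a': "a' \<in> S" "a' \<noteq> a" "dist a' a < d"
      using S(3) d unfolding islimpt_approachable by blast
    obtain b' where b': "b' \<in> T" "b' \<noteq> b" "dist b' b < d"
      using T(3) d unfolding islimpt_approachable by blast
    show ?thesis
    proof (rule mixed_derivatives_diff_bound[OF S(1,2) a'(1,2) T(1,2) b'(1,2) dFu dFv dFuv dFvu])
      fix u v assume u: "u \<in> closed_segment a a'" and v: "v \<in> closed_segment b b'"
      have "dist u a \<le> dist a a'" "dist v b \<le> dist b b'"
        using u v dist_in_closed_segment by blast+
      then have "dist (u, v) (a, b) < 2 * d"
        using a'(3) b'(3) dist_Pair_Pair[of u v a b] sqrt_sum_squares_le_sum_abs[of "dist u a" "dist v b"]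
        by (simp add: dist_commute)
      moreover have "(u, v) \<in> S \<times> T"
        using u v S a'(1) T b'(1) closed_segment_subset by blast
      ultimately show "norm (Fuv u v - Fuv a b) \<le> e \<and> norm (Fvu u v - Fvu a b) \<le> e"
        using d_uv(2)[of "(u, v)"] d_vu(2)[of "(u, v)"] by (auto simp: d_def dist_norm)
    qed (simp_all add: S T)
  qed
  have "norm (Fuv a b - Fvu a b) \<le> 0 + e" if "e > 0" for e
    using small[of "e / 2"] that by simp
  then have "norm (Fuv a b - Fvu a b) \<le> 0"
    by (rule field_le_epsilon)
  then show ?thesis by simp
qed

section \<open>Smooth functions on I x R^2\<close>

text \<open>Directions are numbered as in pdir: 0 is t, 1 is x1 and every n \<ge> 2 is x2.\<close>

definition coord :: "nat \<Rightarrow> real \<Rightarrow> real \<Rightarrow> real \<Rightarrow> real" where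
  "coord n t x y = (if n = 0 then t else if n = 1 then x else y)"

definition coord_dom :: "real set \<Rightarrow> nat \<Rightarrow> real set" where
  "coord_dom I n = (if n = 0 then I else UNIV)"

definition coord_line ::
    "nat \<Rightarrow> (real \<Rightarrow> real \<Rightarrow> real \<Rightarrow> 'a) \<Rightarrow> real \<Rightarrow> real \<Rightarrow> real \<Rightarrow> real \<Rightarrow> 'a" where
  "coord_line n f t x y = (\<lambda>s. if n = 0 then f s x y else if n = 1 then f t s y else f t x s)"

lemma pdir_eq_coord_line:
  "pdir I n f t x y = vector_derivative (coord_line n f t x y) (at (coord n t x y) within coord_dom I n)"
  by (simp add: pdir_def pdt_def pd1_def pd2_def coord_line_def coord_def coord_dom_def)

lemma coord_in_coord_dom: "t \<in> I \<Longrightarrow> coord n t x y \<in> coord_dom I n"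
  by (simp add: coord_def coord_dom_def)

lemma coord_line_at_coord: "coord_line n f t x y (coord n t x y) = f t x y"
  by (simp add: coord_line_def coord_def)

lemma coord_line_map:
  "coord_line n (\<lambda>t x y. L (f t x y)) t x y = (\<lambda>s. L (coord_line n f t x y s))"
  by (rule ext) (simp add: coord_line_def)

lemma coord_line_map2:
  "coord_line n (\<lambda>t x y. H (f t x y) (g t x y)) t x y
     = (\<lambda>s. H (coord_line n f t x y s) (coord_line n g t x y s))"
  by (rule ext) (simp add: coord_line_def)

definition cont_pdiff3 :: "real set \<Rightarrow> (real \<Rightarrow> real \<Rightarrow> real \<Rightarrow> 'a::real_normed_vector) \<Rightarrow> bool" where
  "cont_pdiff3 I f \<longleftrightarrow> continuous_on (I \<times> UNIV) (\<lambda>(t, x, y). f t x y) \<and>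
     (\<forall>t\<in>I. \<forall>x y. (\<lambda>s. f s x y) differentiable (at t within I) \<and>
                  (\<lambda>s. f t s y) differentiable (at x) \<and> (\<lambda>s. f t x s) differentiable (at y))"

lemma smooth3_iff_cont_pdiff3: "smooth3 I f \<longleftrightarrow> (\<forall>ds. cont_pdiff3 I (foldr (pdir I) ds f))"
  by (simp add: smooth3_def cont_pdiff3_def Let_def)

lemma smooth3_imp_cont_pdiff3: "smooth3 I f \<Longrightarrow> cont_pdiff3 I f"
  unfolding smooth3_iff_cont_pdiff3 by (drule spec[of _ "[]"]) simp

lemma smooth3_pdir:
  assumes "smooth3 I f"
  shows "smooth3 I (pdir I n f)"
  unfolding smooth3_iff_cont_pdiff3
proof
  fix ds
  show "cont_pdiff3 I (foldr (pdir I) ds (pdir I n f))"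
    using assms[unfolded smooth3_iff_cont_pdiff3, rule_format, of "ds @ [n]"] by simp
qed

lemma differentiable_coord_line:
  "cont_pdiff3 I f \<Longrightarrow> t \<in> I \<Longrightarrow>
     coord_line n f t x y differentiable (at (coord n t x y) within coord_dom I n)"
  by (simp add: cont_pdiff3_def coord_line_def coord_def coord_dom_def)

lemma has_vector_derivative_pdir:
  "cont_pdiff3 I f \<Longrightarrow> t \<in> I \<Longrightarrow>
     (coord_line n f t x y has_vector_derivative pdir I n f t x y) (at (coord n t x y) within coord_dom I n)"
  unfolding pdir_eq_coord_line by (rule differentiable_coord_line[unfolded vector_derivative_works])

lemma has_vector_derivative_pdir_t:
  "cont_pdiff3 I f \<Longrightarrow> t \<in> I \<Longrightarrow> ((\<lambda>s. f s x y) has_vector_derivative pdir I 0 f t x y) (at t within I)"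
  using has_vector_derivative_pdir[of I f t 0 x y] by (simp add: coord_line_def coord_def coord_dom_def)

lemma has_vector_derivative_pdir_x:
  "cont_pdiff3 I f \<Longrightarrow> t \<in> I \<Longrightarrow> ((\<lambda>s. f t s y) has_vector_derivative pdir I 1 f t x y) (at x)"
  using has_vector_derivative_pdir[of I f t 1 x y] by (simp add: coord_line_def coord_def coord_dom_def)

lemma has_vector_derivative_pdir_y:
  "cont_pdiff3 I f \<Longrightarrow> t \<in> I \<Longrightarrow> ((\<lambda>s. f t x s) has_vector_derivative pdir I 2 f t x y) (at y)"
  using has_vector_derivative_pdir[of I f t 2 x y] by (simp add: coord_line_def coord_def coord_dom_def)

lemma pdir_cong:
  assumes "\<forall>s\<in>I. f s = g s" and t: "t \<in> I"
  shows "pdir I n f t = pdir I n g t"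
proof (intro ext)
  fix x y
  have "coord_line n f t x y s = coord_line n g t x y s" if "s \<in> coord_dom I n" for s
    using assms that by (auto simp: coord_line_def coord_dom_def)
  then show "pdir I n f t x y = pdir I n g t x y"
    unfolding pdir_eq_coord_line
    by (intro vector_derivative_cong_eq always_eventually) (auto intro: coord_in_coord_dom t)
qed

lemma cont_pdiff3_cong:
  assumes eq: "\<forall>t\<in>I. f t = g t" and f: "cont_pdiff3 I f"
  shows "cont_pdiff3 I g"
proof -
  have "continuous_on (I \<times> UNIV) (\<lambda>(t, x, y). f t x y)"
    using f by (simp add: cont_pdiff3_def)
  moreover have "(\<lambda>(t, x, y). f t x y) p = (\<lambda>(t, x, y). g t x y) p" if "p \<in> I \<times> UNIV" for p
    using that eq by (auto simp: case_prod_beta)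
  ultimately have "continuous_on (I \<times> UNIV) (\<lambda>(t, x, y). g t x y)"
    using continuous_on_cong by blast
  moreover have "(\<lambda>s. g s x y) differentiable (at t within I)" if "t \<in> I" for t x y
  proof (rule differentiable_transform_within[OF _ zero_less_one that])
    show "(\<lambda>s. f s x y) differentiable (at t within I)"
      using f that by (simp add: cont_pdiff3_def)
    show "f s x y = g s x y" if "s \<in> I" for s
      using eq that by simp
  qed
  ultimately show ?thesis
    using f eq by (simp add: cont_pdiff3_def)
qed

text \<open>Partial derivatives are only determined on I x R^2, so Q need only be closed under
  pdir up to agreement there.\<close>

lemma smooth3_coinduct:
  assumes "Q f"
    and cont: "\<And>h. Q h \<Longrightarrow> cont_pdiff3 I h"
    and step: "\<And>h n. Q h \<Longrightarrow> \<exists>h'. Q h' \<and> (\<forall>t\<in>I. pdir I n h t = h' t)"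
  shows "smooth3 I f"
proof -
  have "\<exists>h. Q h \<and> (\<forall>t\<in>I. foldr (pdir I) ds f t = h t)" for ds
  proof (induction ds)
    case Nil
    show ?case using \<open>Q f\<close> by auto
  next
    case (Cons n ds)
    then obtain h where h: "Q h" "\<forall>t\<in>I. foldr (pdir I) ds f t = h t" by blast
    obtain h' where h': "Q h'" "\<forall>t\<in>I. pdir I n h t = h' t" using step[OF h(1)] by blast
    have "\<forall>t\<in>I. foldr (pdir I) (n # ds) f t = h' t"
      using pdir_cong[OF h(2)] h'(2) by simp
    then show ?case using h'(1) by blast
  qed
  then show ?thesis
    unfolding smooth3_iff_cont_pdiff3 by (metis cont cont_pdiff3_cong)
qed

lemma cont_pdiff3_linear:
  assumes L: "bounded_linear L" and f: "cont_pdiff3 I f"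
  shows "cont_pdiff3 I (\<lambda>t x y. L (f t x y))"
proof -
  have eq: "(\<lambda>(t, x, y). L (f t x y)) = (\<lambda>p. L ((\<lambda>(t, x, y). f t x y) p))"
    by auto
  have "continuous_on (I \<times> UNIV) (\<lambda>(t, x, y). L (f t x y))"
    unfolding eq using f by (intro bounded_linear.continuous_on[OF L]) (simp add: cont_pdiff3_def)
  moreover have "(\<lambda>s. L (h s)) differentiable F" if "h differentiable F" for h :: "real \<Rightarrow> _" and F
    using that bounded_linear.has_derivative[OF L] unfolding differentiable_def by blast
  ultimately show ?thesis
    using f by (simp add: cont_pdiff3_def)
qed

lemma cont_pdiff3_add:
  assumes f: "cont_pdiff3 I f" and g: "cont_pdiff3 I g"
  shows "cont_pdiff3 I (\<lambda>t x y. f t x y + g t x y)"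
proof -
  have eq: "(\<lambda>(t, x, y). f t x y + g t x y) = (\<lambda>p. (\<lambda>(t, x, y). f t x y) p + (\<lambda>(t, x, y). g t x y) p)"
    by auto
  have "continuous_on (I \<times> UNIV) (\<lambda>(t, x, y). f t x y + g t x y)"
    unfolding eq using f g by (intro continuous_on_add) (simp_all add: cont_pdiff3_def)
  then show ?thesis
    using f g by (simp add: cont_pdiff3_def)
qed

lemma cont_pdiff3_mult:
  fixes f g :: "real \<Rightarrow> real \<Rightarrow> real \<Rightarrow> 'a::real_normed_algebra"
  assumes f: "cont_pdiff3 I f" and g: "cont_pdiff3 I g"
  shows "cont_pdiff3 I (\<lambda>t x y. f t x y * g t x y)"
proof -
  have eq: "(\<lambda>(t, x, y). f t x y * g t x y) = (\<lambda>p. (\<lambda>(t, x, y). f t x y) p * (\<lambda>(t, x, y). g t x y) p)"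
    by auto
  have "continuous_on (I \<times> UNIV) (\<lambda>(t, x, y). f t x y * g t x y)"
    unfolding eq using f g by (intro continuous_on_mult) (simp_all add: cont_pdiff3_def)
  then show ?thesis
    using f g by (simp add: cont_pdiff3_def)
qed

lemma cont_pdiff3_const: "cont_pdiff3 I (\<lambda>t x y. c)"
  by (simp add: cont_pdiff3_def)

lemma continuous_on_compose_cont_pdiff3:
  assumes f: "cont_pdiff3 I f"
    and a: "continuous_on S a" and b: "continuous_on S b" and c: "continuous_on S c"
    and aS: "a ` S \<subseteq> I"
  shows "continuous_on S (\<lambda>p. f (a p) (b p) (c p))"
proof -
  have "continuous_on S (\<lambda>p. (a p, b p, c p))"
    by (intro continuous_on_Pair a b c)
  moreover have "continuous_on ((\<lambda>p. (a p, b p, c p)) ` S) (\<lambda>(t, x, y). f t x y)"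
    using f aS unfolding cont_pdiff3_def by (elim conjE continuous_on_subset) auto
  ultimately have "continuous_on S ((\<lambda>(t, x, y). f t x y) \<circ> (\<lambda>p. (a p, b p, c p)))"
    by (rule continuous_on_compose)
  then show ?thesis
    by (simp add: o_def)
qed

text \<open>By the Leibniz rule this class is closed under pdir.\<close>

inductive leibniz_sum :: "real set \<Rightarrow> (real \<Rightarrow> real \<Rightarrow> real \<Rightarrow> 'a) \<Rightarrow> (real \<Rightarrow> real \<Rightarrow> real \<Rightarrow> 'a)
    \<Rightarrow> (real \<Rightarrow> real \<Rightarrow> real \<Rightarrow> 'a::real_normed_algebra) \<Rightarrow> bool" for I f g where
  product: "leibniz_sum I f g (\<lambda>t x y. foldr (pdir I) as f t x y * foldr (pdir I) bs g t x y)"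
| add: "leibniz_sum I f g h1 \<Longrightarrow> leibniz_sum I f g h2 \<Longrightarrow> leibniz_sum I f g (\<lambda>t x y. h1 t x y + h2 t x y)"

lemma leibniz_sum_cont_pdiff3:
  assumes "leibniz_sum I f g h" "smooth3 I f" "smooth3 I g"
  shows "cont_pdiff3 I h"
  using assms(1)
  by induction (auto intro: cont_pdiff3_mult cont_pdiff3_add
      assms(2,3)[unfolded smooth3_iff_cont_pdiff3, rule_format])

locale nondegenerate_interval =
  fixes I :: "real set"
  assumes interval: "is_interval I" and interior_nonempty: "interior I \<noteq> {}"
begin

lemma convex_interval: "convex I"
  using interval is_interval_convex_1 by blast

lemma islimpt_interval: "t \<in> I \<Longrightarrow> t islimpt I"
proof -
  assume t: "t \<in> I"
  have "t \<in> closure (interior I)"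
    using convex_closure_interior[OF convex_interval interior_nonempty] t closure_subset by blast
  then have "t islimpt interior I"
    using interior_limit_point interior_interior unfolding closure_def by (metis Un_iff mem_Collect_eq)
  then show ?thesis
    using interior_subset islimpt_subset by blast
qed

text \<open>Without t islimpt I the derivative within I would be the junk value of vector_derivative.\<close>

lemma pdir_eqI:
  assumes t: "t \<in> I"
    and D: "(coord_line n f t x y has_vector_derivative D) (at (coord n t x y) within coord_dom I n)"
  shows "pdir I n f t x y = D"
proof -
  have "at (coord n t x y) within coord_dom I n \<noteq> bot"
    using islimpt_interval[OF t] by (auto simp: coord_def coord_dom_def trivial_limit_within)
  then show ?thesis
    unfolding pdir_eq_coord_line using D by (rule vector_derivative_within)
qed

lemma pdir_linear:
  assumes L: "bounded_linear L" and f: "cont_pdiff3 I f" and t: "t \<in> I"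
  shows "pdir I n (\<lambda>t x y. L (f t x y)) t x y = L (pdir I n f t x y)"
proof (rule pdir_eqI[OF t])
  show "(coord_line n (\<lambda>t x y. L (f t x y)) t x y has_vector_derivative L (pdir I n f t x y))
      (at (coord n t x y) within coord_dom I n)"
    unfolding coord_line_map
    by (rule bounded_linear.has_vector_derivative[OF L has_vector_derivative_pdir[OF f t]])
qed

lemma pdir_add:
  assumes f: "cont_pdiff3 I f" and g: "cont_pdiff3 I g" and t: "t \<in> I"
  shows "pdir I n (\<lambda>t x y. f t x y + g t x y) t x y = pdir I n f t x y + pdir I n g t x y"
proof (rule pdir_eqI[OF t])
  show "(coord_line n (\<lambda>t x y. f t x y + g t x y) t x y has_vector_derivative
      pdir I n f t x y + pdir I n g t x y) (at (coord n t x y) within coord_dom I n)"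
    unfolding coord_line_map2
    by (rule has_vector_derivative_add[OF has_vector_derivative_pdir[OF f t]
          has_vector_derivative_pdir[OF g t]])
qed

lemma pdir_mult:
  fixes f g :: "real \<Rightarrow> real \<Rightarrow> real \<Rightarrow> 'a::real_normed_algebra"
  assumes "cont_pdiff3 I f" "cont_pdiff3 I g" "t \<in> I"
  shows "pdir I n (\<lambda>t x y. f t x y * g t x y) t x y = pdir I n f t x y * g t x y + f t x y * pdir I n g t x y"
proof (rule pdir_eqI[OF assms(3)])
  show "(coord_line n (\<lambda>t x y. f t x y * g t x y) t x y has_vector_derivative
      pdir I n f t x y * g t x y + f t x y * pdir I n g t x y) (at (coord n t x y) within coord_dom I n)"
    using has_vector_derivative_mult[OF has_vector_derivative_pdir[OF assms(1,3)]
        has_vector_derivative_pdir[OF assms(2,3)]]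
    unfolding coord_line_map2 coord_line_at_coord by (simp only: add.commute)
qed

lemma pdir_const: "t \<in> I \<Longrightarrow> pdir I n (\<lambda>t x y. c) t x y = 0"
  by (rule pdir_eqI) (simp_all add: coord_line_def has_vector_derivative_const)

lemma smooth3_linear2:
  assumes L: "bounded_linear L" and M: "bounded_linear M" and f: "smooth3 I f" and g: "smooth3 I g"
  shows "smooth3 I (\<lambda>t x y. L (f t x y) + M (g t x y))"
proof (rule smooth3_coinduct[where
      Q = "\<lambda>h. \<exists>ds. h = (\<lambda>t x y. L (foldr (pdir I) ds f t x y) + M (foldr (pdir I) ds g t x y))"])
  note f' = f[unfolded smooth3_iff_cont_pdiff3, rule_format]
  note g' = g[unfolded smooth3_iff_cont_pdiff3, rule_format]
  show "\<exists>ds. (\<lambda>t x y. L (f t x y) + M (g t x y))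
              = (\<lambda>t x y. L (foldr (pdir I) ds f t x y) + M (foldr (pdir I) ds g t x y))"
    by (rule exI[of _ "[]"]) simp
  show "cont_pdiff3 I h"
    if "\<exists>ds. h = (\<lambda>t x y. L (foldr (pdir I) ds f t x y) + M (foldr (pdir I) ds g t x y))" for h
    using that cont_pdiff3_add[OF cont_pdiff3_linear[OF L f'] cont_pdiff3_linear[OF M g']] by blast
  show "\<exists>h'. (\<exists>ds. h' = (\<lambda>t x y. L (foldr (pdir I) ds f t x y) + M (foldr (pdir I) ds g t x y)))
      \<and> (\<forall>t\<in>I. pdir I n h t = h' t)"
    if "\<exists>ds. h = (\<lambda>t x y. L (foldr (pdir I) ds f t x y) + M (foldr (pdir I) ds g t x y))" for h n
  proof -
    from that obtain ds
      where h: "h = (\<lambda>t x y. L (foldr (pdir I) ds f t x y) + M (foldr (pdir I) ds g t x y))" ..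
    have "\<forall>t\<in>I. pdir I n h t
            = (\<lambda>x y. L (foldr (pdir I) (n # ds) f t x y) + M (foldr (pdir I) (n # ds) g t x y))"
      unfolding h
      using pdir_add[OF cont_pdiff3_linear[OF L f'] cont_pdiff3_linear[OF M g']]
        pdir_linear[OF L f'] pdir_linear[OF M g']
      by (simp add: fun_eq_iff)
    then show ?thesis
      by (intro exI[of _ "\<lambda>t x y. L (foldr (pdir I) (n # ds) f t x y) + M (foldr (pdir I) (n # ds) g t x y)"]
          conjI exI[of _ "n # ds"] refl)
  qed
qed

lemma smooth3_linear:
  assumes "bounded_linear L" "smooth3 I f"
  shows "smooth3 I (\<lambda>t x y. L (f t x y))"
  using smooth3_linear2[OF assms(1) bounded_linear_zero assms(2,2)] by simp

lemma smooth3_add: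
  assumes "smooth3 I f" "smooth3 I g"
  shows "smooth3 I (\<lambda>t x y. f t x y + g t x y)"
  using smooth3_linear2[OF bounded_linear_ident bounded_linear_ident assms] by simp

lemma smooth3_const: "smooth3 I (\<lambda>t x y. c)"
proof (rule smooth3_coinduct[where Q = "\<lambda>h. h = (\<lambda>t x y. c) \<or> h = (\<lambda>t x y. 0)"])
  show "cont_pdiff3 I h" if "h = (\<lambda>t x y. c) \<or> h = (\<lambda>t x y. 0)" for h
    using that by (elim disjE) (simp_all add: cont_pdiff3_const)
  show "\<exists>h'. (h' = (\<lambda>t x y. c) \<or> h' = (\<lambda>t x y. 0)) \<and> (\<forall>t\<in>I. pdir I n h t = h' t)"
    if "h = (\<lambda>t x y. c) \<or> h = (\<lambda>t x y. 0)" for h n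
    using that by (intro exI[of _ "\<lambda>t x y. 0"]) (auto intro!: ext simp: pdir_const)
qed simp

lemma leibniz_sum_pdir:
  assumes "leibniz_sum I f g h" and f: "smooth3 I f" and g: "smooth3 I g"
  shows "\<exists>h'. leibniz_sum I f g h' \<and> (\<forall>t\<in>I. pdir I n h t = h' t)"
  using assms(1)
proof induction
  case (product as bs)
  let ?h' = "\<lambda>t x y. foldr (pdir I) (n # as) f t x y * foldr (pdir I) bs g t x y
                   + foldr (pdir I) as f t x y * foldr (pdir I) (n # bs) g t x y"
  have "leibniz_sum I f g ?h'"
    by (intro leibniz_sum.intros)
  moreover have "\<forall>t\<in>I. pdir I n (\<lambda>t x y. foldr (pdir I) as f t x y * foldr (pdir I) bs g t x y) t = ?h' t"
    using pdir_mult[OF f[unfolded smooth3_iff_cont_pdiff3, rule_format]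
        g[unfolded smooth3_iff_cont_pdiff3, rule_format]] by (simp add: fun_eq_iff)
  ultimately show ?case
    by (intro exI conjI)
next
  case (add h1 h2)
  from add.IH(1) obtain h1' where h1': "leibniz_sum I f g h1'" "\<forall>t\<in>I. pdir I n h1 t = h1' t"
    by (elim exE conjE)
  from add.IH(2) obtain h2' where h2': "leibniz_sum I f g h2'" "\<forall>t\<in>I. pdir I n h2 t = h2' t"
    by (elim exE conjE)
  have "leibniz_sum I f g (\<lambda>t x y. h1' t x y + h2' t x y)"
    using h1' h2' by (intro leibniz_sum.intros)
  moreover have "\<forall>t\<in>I. pdir I n (\<lambda>t x y. h1 t x y + h2 t x y) t = (\<lambda>x y. h1' t x y + h2' t x y)"
    using h1'(2) h2'(2) leibniz_sum_cont_pdiff3[OF add.hyps(1) f g] leibniz_sum_cont_pdiff3[OF add.hyps(2) f g]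
    by (simp add: fun_eq_iff pdir_add)
  ultimately show ?case
    by (intro exI conjI)
qed

lemma smooth3_mult:
  fixes f g :: "real \<Rightarrow> real \<Rightarrow> real \<Rightarrow> 'a::real_normed_algebra"
  assumes f: "smooth3 I f" and g: "smooth3 I g"
  shows "smooth3 I (\<lambda>t x y. f t x y * g t x y)"
proof (rule smooth3_coinduct[where Q = "leibniz_sum I f g"])
  show "leibniz_sum I f g (\<lambda>t x y. f t x y * g t x y)"
    using leibniz_sum.product[of I f g "[]" "[]"] by simp
  show "cont_pdiff3 I h" if "leibniz_sum I f g h" for h
    using leibniz_sum_cont_pdiff3[OF that f g] .
  show "\<exists>h'. leibniz_sum I f g h' \<and> (\<forall>t\<in>I. pdir I n h t = h' t)" if "leibniz_sum I f g h" for h n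
    using leibniz_sum_pdir[OF that f g] .
qed

lemma pdir_commute:
  assumes g: "smooth3 I g" and t: "t \<in> I"
  shows "pdir I m (pdir I n g) t x y = pdir I n (pdir I m g) t x y"
proof -
  have D: "cont_pdiff3 I g" "cont_pdiff3 I (pdir I m g)" "cont_pdiff3 I (pdir I m (pdir I n g))" for m n
    using g by (simp_all add: smooth3_pdir smooth3_imp_cont_pdiff3)
  have tx: "pdir I 1 (pdir I 0 g) t x y = pdir I 0 (pdir I 1 g) t x y"
    using t convex_interval islimpt_interval[OF t]
    by (intro mixed_derivatives_eq[where S = I and T = UNIV and a = t and b = x
          and F = "\<lambda>u v. g u v y"
          and Fuv = "\<lambda>u v. pdir I 1 (pdir I 0 g) u v y" and Fvu = "\<lambda>u v. pdir I 0 (pdir I 1 g) u v y"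
          and Fu = "\<lambda>u v. pdir I 0 g u v y" and Fv = "\<lambda>u v. pdir I 1 g u v y"])
      (auto simp: case_prod_beta' simp del: One_nat_def
        intro!: has_vector_derivative_pdir_t has_vector_derivative_pdir_x
          continuous_on_compose_cont_pdiff3 continuous_intros D)
  have ty: "pdir I 2 (pdir I 0 g) t x y = pdir I 0 (pdir I 2 g) t x y"
    using t convex_interval islimpt_interval[OF t]
    by (intro mixed_derivatives_eq[where S = I and T = UNIV and a = t and b = y
          and F = "\<lambda>u v. g u x v"
          and Fuv = "\<lambda>u v. pdir I 2 (pdir I 0 g) u x v" and Fvu = "\<lambda>u v. pdir I 0 (pdir I 2 g) u x v"
          and Fu = "\<lambda>u v. pdir I 0 g u x v" and Fv = "\<lambda>u v. pdir I 2 g u x v"])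
      (auto simp: case_prod_beta' simp del: One_nat_def
        intro!: has_vector_derivative_pdir_t has_vector_derivative_pdir_y
          continuous_on_compose_cont_pdiff3 continuous_intros D)
  have xy: "pdir I 2 (pdir I 1 g) t x y = pdir I 1 (pdir I 2 g) t x y"
    using t
    by (intro mixed_derivatives_eq[where S = UNIV and T = UNIV and a = x and b = y
          and F = "\<lambda>u v. g t u v"
          and Fuv = "\<lambda>u v. pdir I 2 (pdir I 1 g) t u v" and Fvu = "\<lambda>u v. pdir I 1 (pdir I 2 g) t u v"
          and Fu = "\<lambda>u v. pdir I 1 g t u v" and Fv = "\<lambda>u v. pdir I 2 g t u v"])
      (auto simp: case_prod_beta' simp del: One_nat_def
        intro!: has_vector_derivative_pdir_x has_vector_derivative_pdir_y
          continuous_on_compose_cont_pdiff3 continuous_intros D)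
  have commute_012: "pdir I m' (pdir I n' g) t x y = pdir I n' (pdir I m' g) t x y"
    if "m' \<in> {0, 1, 2}" "n' \<in> {0, 1, 2}" for m' n'
    using that by (elim insertE emptyE) (simp_all add: tx ty xy del: One_nat_def)
  have min2: "min k 2 \<in> {0, 1, 2}" for k :: nat
    by auto
  have pdir_min: "pdir I (min k 2) = pdir I k" for k :: nat
    unfolding pdir_def min_def by auto
  show ?thesis
    using commute_012[OF min2[of m] min2[of n]] by (simp only: pdir_min)
qed

end

section \<open>Covariant derivatives\<close>

definition cov :: "real set \<Rightarrow> nat \<Rightarrow> (real \<Rightarrow> real \<Rightarrow> real \<Rightarrow> real)
    \<Rightarrow> (real \<Rightarrow> real \<Rightarrow> real \<Rightarrow> complex) \<Rightarrow> real \<Rightarrow> real \<Rightarrow> real \<Rightarrow> complex" where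
  "cov I n A f t x y = pdir I n f t x y + \<i> * of_real (A t x y) * f t x y"

lemma cov_fun: "cov I n A f = (\<lambda>t x y. pdir I n f t x y + \<i> * of_real (A t x y) * f t x y)"
  by (simp add: fun_eq_iff cov_def)

lemma cDt_eq_cov: "cDt I At = cov I 0 At"
  by (simp add: fun_eq_iff cDt_def cov_def pdir_def)

lemma cDz_eq_cov: "cDz A1 A2 f = (\<lambda>t x y. 1/2 * cov I 1 A1 f t x y + (- \<i>/2) * cov I 2 A2 f t x y)"
  by (simp add: fun_eq_iff cDz_def cov_def pdir_def Az_def field_simps)

lemma cDzbar_eq_cov: "cDzbar A1 A2 f = (\<lambda>t x y. 1/2 * cov I 1 A1 f t x y + \<i>/2 * cov I 2 A2 f t x y)"
  by (simp add: fun_eq_iff cDzbar_def cov_def pdir_def Azbar_def field_simps)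

lemma cDzbar_eq_0: "(\<And>x y. h t x y = 0) \<Longrightarrow> cDzbar A1 A2 h t x y = 0"
  by (simp add: cDzbar_def pd1_def pd2_def)

context nondegenerate_interval
begin

lemma smooth3_of_real: "smooth3 I f \<Longrightarrow> smooth3 I (\<lambda>t x y. of_real (f t x y))"
  by (rule smooth3_linear[OF bounded_linear_of_real])

lemma pdir_of_real:
  "cont_pdiff3 I f \<Longrightarrow> t \<in> I \<Longrightarrow> pdir I n (\<lambda>t x y. of_real (f t x y)) t x y = of_real (pdir I n f t x y)"
  by (rule pdir_linear[OF bounded_linear_of_real])

lemma smooth3_cov: "smooth3 I A \<Longrightarrow> smooth3 I f \<Longrightarrow> smooth3 I (cov I n A f)"
  unfolding cov_fun by (intro smooth3_add smooth3_mult smooth3_pdir smooth3_const smooth3_of_real)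

lemmas smooth3_rules = smooth3_add smooth3_mult smooth3_const smooth3_of_real smooth3_pdir smooth3_cov
  smooth3_imp_cont_pdiff3

lemma cov_lincomb:
  assumes "cont_pdiff3 I u" "cont_pdiff3 I v" "t \<in> I"
  shows "cov I n A (\<lambda>t x y. a * u t x y + b * v t x y) t x y = a * cov I n A u t x y + b * cov I n A v t x y"
  using assms
  by (simp add: cov_def pdir_add pdir_mult pdir_const cont_pdiff3_mult cont_pdiff3_const algebra_simps)

lemma cov_commutator:
  assumes g: "smooth3 I g" and Am: "smooth3 I Am" and An: "smooth3 I An" and t: "t \<in> I"
  shows "cov I m Am (cov I n An g) t x y - cov I n An (cov I m Am g) t x y
           = \<i> * of_real (pdir I m An t x y - pdir I n Am t x y) * g t x y"
  using assms pdir_commute[OF g t, of m n]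
  by (simp add: cov_fun pdir_add pdir_mult pdir_const pdir_of_real smooth3_rules algebra_simps)

lemma smooth3_cDt: "smooth3 I At \<Longrightarrow> smooth3 I f \<Longrightarrow> smooth3 I (cDt I At f)"
  unfolding cDt_eq_cov by (rule smooth3_cov)

lemma smooth3_cDz: "smooth3 I A1 \<Longrightarrow> smooth3 I A2 \<Longrightarrow> smooth3 I f \<Longrightarrow> smooth3 I (cDz A1 A2 f)"
  unfolding cDz_eq_cov[where I = I] by (intro smooth3_rules)

lemma smooth3_cDzbar: "smooth3 I A1 \<Longrightarrow> smooth3 I A2 \<Longrightarrow> smooth3 I f \<Longrightarrow> smooth3 I (cDzbar A1 A2 f)"
  unfolding cDzbar_eq_cov[where I = I] by (intro smooth3_rules)

lemma cDz_cDzbar_commutator: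
  assumes g: "smooth3 I g" and A1: "smooth3 I A1" and A2: "smooth3 I A2" and t: "t \<in> I"
  shows "cDz A1 A2 (cDzbar A1 A2 g) t x y - cDzbar A1 A2 (cDz A1 A2 g) t x y
           = \<i> * Fzzbar A1 A2 t x y * g t x y"
proof -
  have "cDz A1 A2 (cDzbar A1 A2 g) t x y - cDzbar A1 A2 (cDz A1 A2 g) t x y
          = \<i>/2 * (cov I 1 A1 (cov I 2 A2 g) t x y - cov I 2 A2 (cov I 1 A1 g) t x y)"
    unfolding cDz_eq_cov[where I = I] cDzbar_eq_cov[where I = I]
    using assms by (simp only: cov_lincomb smooth3_rules) (simp add: algebra_simps)
  also have "\<dots> = \<i>/2 * (\<i> * of_real (pdir I 1 A2 t x y - pdir I 2 A1 t x y) * g t x y)"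
    unfolding cov_commutator[OF g A1 A2 t] ..
  also have "\<dots> = \<i> * Fzzbar A1 A2 t x y * g t x y"
    by (simp add: Fzzbar_def pdir_def field_simps)
  finally show ?thesis .
qed

lemma cDt_cDzbar_commutator:
  assumes g: "smooth3 I g" and At: "smooth3 I At" and A1: "smooth3 I A1" and A2: "smooth3 I A2"
    and t: "t \<in> I"
  shows "cDt I At (cDzbar A1 A2 g) t x y - cDzbar A1 A2 (cDt I At g) t x y
           = \<i> * Ftzbar I At A1 A2 t x y * g t x y"
proof -
  have "cDt I At (cDzbar A1 A2 g) t x y - cDzbar A1 A2 (cDt I At g) t x y
          = 1/2 * (cov I 0 At (cov I 1 A1 g) t x y - cov I 1 A1 (cov I 0 At g) t x y)
            + \<i>/2 * (cov I 0 At (cov I 2 A2 g) t x y - cov I 2 A2 (cov I 0 At g) t x y)"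
    unfolding cDt_eq_cov cDzbar_eq_cov[where I = I]
    using assms by (simp only: cov_lincomb smooth3_rules) (simp add: algebra_simps)
  also have "\<dots> = 1/2 * (\<i> * of_real (pdir I 0 A1 t x y - pdir I 1 At t x y) * g t x y)
      + \<i>/2 * (\<i> * of_real (pdir I 0 A2 t x y - pdir I 2 At t x y) * g t x y)"
    unfolding cov_commutator[OF g At A1 t] cov_commutator[OF g At A2 t] ..
  also have "\<dots> = \<i> * Ftzbar I At A1 A2 t x y * g t x y"
    by (simp add: Ftzbar_def pdir_def field_simps)
  finally show ?thesis .
qed

lemma cDzbar_lincomb:
  assumes "smooth3 I u" "smooth3 I v" "smooth3 I A1" "smooth3 I A2" "t \<in> I"
  shows "cDzbar A1 A2 (\<lambda>t x y. a * u t x y + b * v t x y) t x y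
           = a * cDzbar A1 A2 u t x y + b * cDzbar A1 A2 v t x y"
  unfolding cDzbar_eq_cov[where I = I]
  using assms by (simp only: cov_lincomb smooth3_rules) (simp add: algebra_simps)

lemma cDzbar_evolution_eq:
  assumes g: "smooth3 I g" and h: "smooth3 I h"
    and At: "smooth3 I At" and A1: "smooth3 I A1" and A2: "smooth3 I A2" and t: "t \<in> I"
    and eq: "\<And>x y. \<i> * cDt I At g t x y + 4 * h t x y = 0"
  shows "\<i> * cDt I At (cDzbar A1 A2 g) t x y + 4 * cDzbar A1 A2 h t x y
           + Ftzbar I At A1 A2 t x y * g t x y = 0"
proof -
  have "0 = cDzbar A1 A2 (\<lambda>t x y. \<i> * cDt I At g t x y + 4 * h t x y) t x y"
    by (rule cDzbar_eq_0[symmetric]) (rule eq)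
  also have "\<dots> = \<i> * cDzbar A1 A2 (cDt I At g) t x y + 4 * cDzbar A1 A2 h t x y"
    using assms by (intro cDzbar_lincomb smooth3_cDt)
  also have "\<dots> = \<i> * cDt I At (cDzbar A1 A2 g) t x y + 4 * cDzbar A1 A2 h t x y
                  + Ftzbar I At A1 A2 t x y * g t x y"
    using cDt_cDzbar_commutator[OF g At A1 A2 t, of x y] by (simp add: algebra_simps)
  finally show ?thesis
    by simp
qed

lemma cDzbar_solves_schroedinger:
  assumes phi: "smooth3 I phi" and At: "smooth3 I At" and A1: "smooth3 I A1" and A2: "smooth3 I A2"
    and t: "t \<in> I"
    and eq1: "\<And>x y. Ftzbar I At A1 A2 t x y = cnj (phi t x y) * cDzbar A1 A2 phi t x y"
    and eq2: "\<And>x y. Fzzbar A1 A2 t x y = 1 / (4 * \<i>) * of_real ((cmod (phi t x y))\<^sup>2)"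
    and eq3: "\<And>x y. \<i> * cDt I At phi t x y + 4 * cDz A1 A2 (cDzbar A1 A2 phi) t x y = 0"
  shows "\<i> * cDt I At (cDzbar A1 A2 phi) t x y + 4 * cDz A1 A2 (cDzbar A1 A2 (cDzbar A1 A2 phi)) t x y = 0"
proof -
  define psi where "psi = cDzbar A1 A2 phi"
  have psi: "smooth3 I psi"
    unfolding psi_def by (rule smooth3_cDzbar[OF A1 A2 phi])
  have curvatures: "4 * \<i> * Fzzbar A1 A2 t x y * psi t x y = Ftzbar I At A1 A2 t x y * phi t x y"
    using eq1 eq2 complex_norm_square[of "phi t x y"] by (simp add: psi_def field_simps)
  have "\<i> * cDt I At psi t x y + 4 * cDz A1 A2 (cDzbar A1 A2 psi) t x y
          = \<i> * cDt I At psi t x y + 4 * cDzbar A1 A2 (cDz A1 A2 psi) t x y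
            + 4 * \<i> * Fzzbar A1 A2 t x y * psi t x y"
    using cDz_cDzbar_commutator[OF psi A1 A2 t, of x y] by (simp add: algebra_simps)
  also have "\<dots> = \<i> * cDt I At psi t x y + 4 * cDzbar A1 A2 (cDz A1 A2 psi) t x y
                   + Ftzbar I At A1 A2 t x y * phi t x y"
    by (simp only: curvatures)
  also have "\<dots> = 0"
    unfolding psi_def
    by (intro cDzbar_evolution_eq smooth3_cDz phi At A1 A2 t psi[unfolded psi_def] eq3)
  finally show ?thesis
    unfolding psi_def .
qed

lemma cDzbar_cDzbar_evolution:
  assumes phi: "smooth3 I phi" and At: "smooth3 I At" and A1: "smooth3 I A1" and A2: "smooth3 I A2"
    and t: "t \<in> I"
    and eq1: "\<And>x y. Ftzbar I At A1 A2 t x y = cnj (phi t x y) * cDzbar A1 A2 phi t x y"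
    and eq_psi: "\<And>x y. \<i> * cDt I At (cDzbar A1 A2 phi) t x y
                         + 4 * cDz A1 A2 (cDzbar A1 A2 (cDzbar A1 A2 phi)) t x y = 0"
  shows "\<i> * cDt I At (cDzbar A1 A2 (cDzbar A1 A2 phi)) t x y
           + 4 * cDzbar A1 A2 (cDz A1 A2 (cDzbar A1 A2 (cDzbar A1 A2 phi))) t x y
           + cnj (phi t x y) * (cDzbar A1 A2 phi t x y)\<^sup>2 = 0"
proof -
  have "Ftzbar I At A1 A2 t x y * cDzbar A1 A2 phi t x y = cnj (phi t x y) * (cDzbar A1 A2 phi t x y)\<^sup>2"
    using eq1 by (simp add: power2_eq_square)
  moreover have "\<i> * cDt I At (cDzbar A1 A2 (cDzbar A1 A2 phi)) t x y
                   + 4 * cDzbar A1 A2 (cDz A1 A2 (cDzbar A1 A2 (cDzbar A1 A2 phi))) t x y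
                   + Ftzbar I At A1 A2 t x y * cDzbar A1 A2 phi t x y = 0"
    by (intro cDzbar_evolution_eq smooth3_cDz smooth3_cDzbar phi At A1 A2 t eq_psi)
  ultimately show ?thesis
    by (simp only:)
qed

end

theorem proposition2p1:
  fixes I :: "real set"
    and phi :: "real \<Rightarrow> real \<Rightarrow> real \<Rightarrow> complex"
    and At A1 A2 :: "real \<Rightarrow> real \<Rightarrow> real \<Rightarrow> real"
  assumes I_interval: "is_interval I" and I_nondeg: "interior I \<noteq> {}"
    and smooth_phi: "smooth3 I phi"
    and smooth_At: "smooth3 I At" and smooth_A1: "smooth3 I A1" and smooth_A2: "smooth3 I A2"
    and eq1: "\<And>t x y. t \<in> I \<Longrightarrow>
       Ftzbar I At A1 A2 t x y = cnj (phi t x y) * cDzbar A1 A2 phi t x y"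
    and eq2: "\<And>t x y. t \<in> I \<Longrightarrow>
       Fzzbar A1 A2 t x y = 1 / (4 * \<i>) * of_real ((cmod (phi t x y))\<^sup>2)"
    and eq3: "\<And>t x y. t \<in> I \<Longrightarrow>
       \<i> * cDt I At phi t x y + 4 * cDz A1 A2 (cDzbar A1 A2 phi) t x y = 0"
  shows "\<forall>t\<in>I. \<forall>x y.
      \<i> * cDt I At (cDzbar A1 A2 phi) t x y
        + 4 * cDz A1 A2 (cDzbar A1 A2 (cDzbar A1 A2 phi)) t x y = 0
    \<and> \<i> * cDt I At (cDzbar A1 A2 (cDzbar A1 A2 phi)) t x y
        + 4 * cDzbar A1 A2 (cDz A1 A2 (cDzbar A1 A2 (cDzbar A1 A2 phi))) t x y
        + cnj (phi t x y) * (cDzbar A1 A2 phi t x y)\<^sup>2 = 0"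
proof (intro ballI allI conjI)
  interpret nondegenerate_interval I
    using I_interval I_nondeg by unfold_locales
  fix t x y
  assume t: "t \<in> I"
  note eq_psi = cDzbar_solves_schroedinger[OF smooth_phi smooth_At smooth_A1 smooth_A2 t
      eq1[OF t] eq2[OF t] eq3[OF t]]
  then show "\<i> * cDt I At (cDzbar A1 A2 phi) t x y
               + 4 * cDz A1 A2 (cDzbar A1 A2 (cDzbar A1 A2 phi)) t x y = 0" .
  show "\<i> * cDt I At (cDzbar A1 A2 (cDzbar A1 A2 phi)) t x y
          + 4 * cDzbar A1 A2 (cDz A1 A2 (cDzbar A1 A2 (cDzbar A1 A2 phi))) t x y
          + cnj (phi t x y) * (cDzbar A1 A2 phi t x y)\<^sup>2 = 0"
    by (rule cDzbar_cDzbar_evolution[OF smooth_phi smooth_At smooth_A1 smooth_A2 t eq1[OF t] eq_psi])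
qed

end
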